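(* Let $P\in\mathsf{AST}$. For a rational $0<\delta<1$ and a scheduler $f$, call the smallest $k\in\mathbb{N}$ satisfying $\sum_{\tau\in T_{\le k}(P,f)}\mathrm{Prob}(\tau)>\delta$ the required simulation time to cross $\delta$ for $f$. Then, for each such $\delta$, the set of required simulation times to cross $\delta$ over all schedulers $f$ has an upper bound.
   Context: pGCL. Fix a countable set $\mathrm{Var}$ of variables taking rational values. Programs are generated by $P ::= \bot \mid v:=e \mid P;P \mid P\oplus_p P \mid P\,[\!]\,P \mid \mathtt{while}(b)\{P\}$ ($v\in\mathrm{Var}$, $e,p$ arithmetical expressions, $b$ boolean expression, $\bot$ the empty program; $\oplus_p$ probabilistic choice, $[\!]$ nondeterministic choice). A valuation is $\eta:\mathrm{Var}\to\mathbb{Q}$. A scheduler is a total function $f:\{L_n,R_n,L_p,R_p\}^*\to\{L_n,R_n\}$; $\mathbb{F}$ is the set of schedulers. An execution state is $(P,\eta,a,w)$ with $a\in\mathbb{Q}\cap(0,1]$, $w\in\{L_n,R_n,L_p,R_p\}^*$; states with program $\bot$ are terminal. For $f\in\mathbb{F}$, $\to_f$ is the smallest relation with: $(v:=e,\eta,a,w)\to_f(\bot,\eta[v\mapsto[\![e]\!]_\eta],a,w)$; if $(P_1,\eta,a,w)\to_f(P_1',\eta',a',w')$ then $(P_1;P_2,\eta,a,w)\to_f(P_1';P_2,\eta',a',w')$; $(\bot;P_2,\eta,a,w)\to_f(P_2,\eta,a,w)$; $(P_1\oplus_pP_2,\eta,a,w)\to_f(P_2,\eta,a,wR_p)$ if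 $[\![p]\!]_\eta\le0$, $\to_f(P_1,\eta,a,wL_p)$ if $[\![p]\!]_\eta\ge1$, and if $0<[\![p]\!]_\eta<1$ both $\to_f(P_1,\eta,a[\![p]\!]_\eta,wL_p)$ and $\to_f(P_2,\eta,a(1-[\![p]\!]_\eta),wR_p)$; $(P_1[\!]P_2,\eta,a,w)\to_f(P_1,\eta,a,wL_n)$ if $f(w)=L_n$, $\to_f(P_2,\eta,a,wR_n)$ if $f(w)=R_n$; $(\mathtt{while}(b)\{P\},\eta,a,w)\to_f(P;\mathtt{while}(b)\{P\},\eta,a,w)$ if $b$ holds, else $\to_f(\bot,\eta,a,w)$. $\to_f^n$ ($n\ge1$) is the $n$-fold composition, $\to_f^*=\bigcup_{n\ge1}\to_f^n$. The initial execution state of $P$ is $(P,\eta_0,1,\varepsilon)$, $\eta_0\equiv0$. $\mathrm{Prob}((P,\eta,a,w))=a$. $T_{\le k}(P,f)$ is the set of terminal execution states $\tau$ with $(P,\eta_0,1,\varepsilon)\to_f^n\tau$ for some $n\le k$. $\Pr_{\mathrm{term}}(P,f)=\sum\mathrm{Prob}(\tau)$ over all terminal $\tau$ with $(P,\eta_0,1,\varepsilon)\to_f^*\tau$. $\mathsf{AST}$ is the set of programs $P$ with $\Pr_{\mathrm{term}}(P,f)=1$ for every scheduler $f$. *)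

theory Defs
  imports "HOL-Analysis.Analysis"
begin

type_synonym var = nat
type_synonym valuation = "var \<Rightarrow> rat"

text \<open>Arithmetic and boolean expressions (the paper leaves their syntax open).\<close>
datatype aexp = N rat | V var | Plus aexp aexp | Minus aexp aexp
  | Times aexp aexp | Divide aexp aexp

datatype bexp = BTrue | BFalse | BNot bexp | BAnd bexp bexp | BOr bexp bexp
  | BLess aexp aexp | BLeq aexp aexp | BEq aexp aexp

fun aval :: "aexp \<Rightarrow> valuation \<Rightarrow> rat" where
  "aval (N c) \<eta> = c"
| "aval (V v) \<eta> = \<eta> v"
| "aval (Plus e1 e2) \<eta> = aval e1 \<eta> + aval e2 \<eta>"
| "aval (Minus e1 e2) \<eta> = aval e1 \<eta> - aval e2 \<eta>"
| "aval (Times e1 e2) \<eta> = aval e1 \<eta> * aval e2 \<eta>"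
| "aval (Divide e1 e2) \<eta> = aval e1 \<eta> / aval e2 \<eta>"

fun bval :: "bexp \<Rightarrow> valuation \<Rightarrow> bool" where
  "bval BTrue \<eta> = True"
| "bval BFalse \<eta> = False"
| "bval (BNot b) \<eta> = (\<not> bval b \<eta>)"
| "bval (BAnd b1 b2) \<eta> = (bval b1 \<eta> \<and> bval b2 \<eta>)"
| "bval (BOr b1 b2) \<eta> = (bval b1 \<eta> \<or> bval b2 \<eta>)"
| "bval (BLess e1 e2) \<eta> = (aval e1 \<eta> < aval e2 \<eta>)"
| "bval (BLeq e1 e2) \<eta> = (aval e1 \<eta> \<le> aval e2 \<eta>)"
| "bval (BEq e1 e2) \<eta> = (aval e1 \<eta> = aval e2 \<eta>)"

text \<open>pGCL programs. Bot is the empty program, PChoice P p Q is P \<oplus>_p Q,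
  NChoice P Q is the nondeterministic choice P [] Q.\<close>
datatype prog = Bot | Assign var aexp | Seq prog prog
  | PChoice prog aexp prog | NChoice prog prog | While bexp prog

datatype dir = Ln | Rn | Lp | Rp

definition schedulers :: "(dir list \<Rightarrow> dir) set" where
  "schedulers = {f. \<forall>w. f w \<in> {Ln, Rn}}"

text \<open>Execution states (P, \<eta>, a, w); a is a rational in (0,1].\<close>
type_synonym state = "prog \<times> valuation \<times> rat \<times> dir list"

inductive step :: "(dir list \<Rightarrow> dir) \<Rightarrow> state \<Rightarrow> state \<Rightarrow> bool" for f where
  assign: "step f (Assign v e, \<eta>, a, w) (Bot, \<eta>(v := aval e \<eta>), a, w)"
| seq: "step f (P1, \<eta>, a, w) (P1', \<eta>', a', w') \<Longrightarrow>
        step f (Seq P1 P2, \<eta>, a, w) (Seq P1' P2, \<eta>', a', w')"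
| seq_bot: "step f (Seq Bot P2, \<eta>, a, w) (P2, \<eta>, a, w)"
| pchoice_le0: "aval p \<eta> \<le> 0 \<Longrightarrow> step f (PChoice P1 p P2, \<eta>, a, w) (P2, \<eta>, a, w @ [Rp])"
| pchoice_ge1: "aval p \<eta> \<ge> 1 \<Longrightarrow> step f (PChoice P1 p P2, \<eta>, a, w) (P1, \<eta>, a, w @ [Lp])"
| pchoice_L: "0 < aval p \<eta> \<Longrightarrow> aval p \<eta> < 1 \<Longrightarrow>
    step f (PChoice P1 p P2, \<eta>, a, w) (P1, \<eta>, a * aval p \<eta>, w @ [Lp])"
| pchoice_R: "0 < aval p \<eta> \<Longrightarrow> aval p \<eta> < 1 \<Longrightarrow>
    step f (PChoice P1 p P2, \<eta>, a, w) (P2, \<eta>, a * (1 - aval p \<eta>), w @ [Rp])"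
| nchoice_L: "f w = Ln \<Longrightarrow> step f (NChoice P1 P2, \<eta>, a, w) (P1, \<eta>, a, w @ [Ln])"
| nchoice_R: "f w = Rn \<Longrightarrow> step f (NChoice P1 P2, \<eta>, a, w) (P2, \<eta>, a, w @ [Rn])"
| while_true: "bval b \<eta> \<Longrightarrow> step f (While b P, \<eta>, a, w) (Seq P (While b P), \<eta>, a, w)"
| while_false: "\<not> bval b \<eta> \<Longrightarrow> step f (While b P, \<eta>, a, w) (Bot, \<eta>, a, w)"

definition init_state :: "prog \<Rightarrow> state" where
  "init_state P = (P, (\<lambda>_. 0), 1, [])"

definition terminal :: "state \<Rightarrow> bool" where
  "terminal \<tau> \<longleftrightarrow> fst \<tau> = Bot"

definition Prob :: "state \<Rightarrow> rat" where
  "Prob \<tau> = fst (snd (snd \<tau>))"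

definition T_le :: "nat \<Rightarrow> prog \<Rightarrow> (dir list \<Rightarrow> dir) \<Rightarrow> state set" where
  "T_le k P f = {\<tau>. terminal \<tau> \<and> (\<exists>n. 1 \<le> n \<and> n \<le> k \<and> (step f ^^ n) (init_state P) \<tau>)}"

definition T_all :: "prog \<Rightarrow> (dir list \<Rightarrow> dir) \<Rightarrow> state set" where
  "T_all P f = {\<tau>. terminal \<tau> \<and> (\<exists>n. 1 \<le> n \<and> (step f ^^ n) (init_state P) \<tau>)}"

definition Pr_term :: "prog \<Rightarrow> (dir list \<Rightarrow> dir) \<Rightarrow> real" where
  "Pr_term P f = (\<Sum>\<^sub>\<infinity>\<tau>\<in>T_all P f. real_of_rat (Prob \<tau>))"

definition AST :: "prog set" where
  "AST = {P. \<forall>f\<in>schedulers. Pr_term P f = 1}"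

definition req_time :: "prog \<Rightarrow> rat \<Rightarrow> (dir list \<Rightarrow> dir) \<Rightarrow> nat" where
  "req_time P \<delta> f = (LEAST k. (\<Sum>\<tau>\<in>T_le k P f. Prob \<tau>) > \<delta>)"

end

theory Submission
  imports Defs
begin

text \<open>Suppose the required simulation times were unbounded. Then for every \<open>k\<close> some scheduler
  has collected termination probability at most \<open>\<delta>\<close> within \<open>k\<close> steps. The first \<open>k\<close> steps
  only consult the scheduler on histories shorter than \<open>k\<close>, of which there are finitely many,
  so a Koenig-type compactness argument glues these schedulers into a single one that stays
  at or below \<open>\<delta>\<close> forever. Under that scheduler the program terminates with probability at
  most \<open>\<delta>\<close> < 1, contradicting almost-sure termination.\<close>

definition agree_below :: "nat \<Rightarrow> ('a list \<Rightarrow> 'b) \<Rightarrow> ('a list \<Rightarrow> 'b) \<Rightarrow> bool" where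
  "agree_below k f g \<longleftrightarrow> (\<forall>w. length w < k \<longrightarrow> f w = g w)"

lemma agree_below_sym: "agree_below k f g \<Longrightarrow> agree_below k g f"
  by (simp add: agree_below_def)

lemma agree_below_trans: "agree_below k f g \<Longrightarrow> agree_below k g h \<Longrightarrow> agree_below k f h"
  by (simp add: agree_below_def)

lemma agree_below_mono: "j \<le> k \<Longrightarrow> agree_below k f g \<Longrightarrow> agree_below j f g"
  by (simp add: agree_below_def)

lemma infinitely_many_agree_below:
  fixes F :: "nat \<Rightarrow> 'a::finite list \<Rightarrow> 'b"
  assumes "finite B" and "\<And>j. F j \<in> UNIV \<rightarrow> B"
  obtains j0 where "infinite {j. agree_below k (F j) (F j0)}"
proof -
  let ?L = "{w :: 'a list. length w < k}"
  let ?restr = "\<lambda>j. restrict (F j) ?L"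
  have "?L \<subseteq> {w. set w \<subseteq> UNIV \<and> length w \<le> k}"
    by auto
  then have "finite ?L"
    by (rule finite_subset) (use finite_lists_length_le[of "UNIV :: 'a set" k] in simp)
  then have "finite (\<Pi>\<^sub>E w\<in>?L. B)"
    using assms(1) by (simp add: finite_PiE)
  moreover have "range ?restr \<subseteq> (\<Pi>\<^sub>E w\<in>?L. B)"
    using assms(2) by (simp add: image_subset_iff restrict_PiE_iff Pi_iff)
  ultimately have "finite (range ?restr)"
    by (rule finite_subset[rotated])
  then obtain j0 where "infinite (?restr -` {?restr j0})"
    by (rule inf_img_fin_domE) auto
  moreover have "?restr -` {?restr j0} \<subseteq> {j. agree_below k (F j) (F j0)}"
  proof (clarsimp simp: agree_below_def)
    fix j and w :: "'a list"
    assume "?restr j = ?restr j0" and "length w < k"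
    then have "?restr j w = ?restr j0 w"
      by simp
    with \<open>length w < k\<close> show "F j w = F j0 w"
      by simp
  qed
  ultimately have "infinite {j. agree_below k (F j) (F j0)}"
    by (rule infinite_super[rotated])
  then show thesis
    by (rule that)
qed

lemma agree_below_chain_limit:
  assumes "\<And>k. agree_below k (G k) (G (Suc k))"
  shows "agree_below k (\<lambda>w. G (Suc (length w)) w) (G k)"
proof -
  have chain: "agree_below k (G m) (G k)" if "k \<le> m" for k m
    using that
  proof (induction m rule: dec_induct)
    case (step m)
    have "agree_below k (G (Suc m)) (G m)"
      using agree_below_mono[OF \<open>k \<le> m\<close> assms[of m]] by (rule agree_below_sym)
    then show ?case
      using step.IH by (rule agree_below_trans)
  qed (simp add: agree_below_def)
  show ?thesis
    unfolding agree_below_def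
  proof (intro allI impI)
    fix w :: "'a list"
    assume "length w < k"
    then show "G (Suc (length w)) w = G k w"
      using chain[of "Suc (length w)" k] by (simp add: agree_below_def)
  qed
qed

lemma koenig_compactness:
  fixes Q :: "nat \<Rightarrow> ('a::finite list \<Rightarrow> 'b) \<Rightarrow> bool"
  assumes "finite B"
    and local: "\<And>k f g. agree_below k f g \<Longrightarrow> Q k f \<Longrightarrow> Q k g"
    and antimono: "\<And>j k f. j \<le> k \<Longrightarrow> Q k f \<Longrightarrow> Q j f"
    and approx: "\<And>k. \<exists>f \<in> UNIV \<rightarrow> B. Q k f"
  shows "\<exists>f \<in> UNIV \<rightarrow> B. \<forall>k. Q k f"
proof -
  define extendable where "extendable k g \<longleftrightarrow>
    g \<in> UNIV \<rightarrow> B \<and> (\<forall>j. \<exists>f \<in> UNIV \<rightarrow> B. agree_below k f g \<and> Q j f)" for k g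
  have extend: "\<exists>g'. extendable (Suc k) g' \<and> agree_below k g g'" if "extendable k g" for k g
  proof -
    from that have "\<forall>j. \<exists>f. f \<in> UNIV \<rightarrow> B \<and> agree_below k f g \<and> Q j f"
      unfolding extendable_def by blast
    then obtain F where F: "\<forall>j. F j \<in> UNIV \<rightarrow> B \<and> agree_below k (F j) g \<and> Q j (F j)"
      by (rule choice[THEN exE])
    then obtain j0 where j0: "infinite {j. agree_below (Suc k) (F j) (F j0)}"
      using infinitely_many_agree_below[OF \<open>finite B\<close>] by blast
    have "\<exists>f \<in> UNIV \<rightarrow> B. agree_below (Suc k) f (F j0) \<and> Q j f" for j
    proof -
      obtain j' where "j \<le> j'" and "agree_below (Suc k) (F j') (F j0)"
        using j0 by (auto simp: infinite_nat_iff_unbounded_le)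
      with F antimono show ?thesis
        by blast
    qed
    with F have "extendable (Suc k) (F j0)"
      unfolding extendable_def by blast
    moreover from F have "agree_below k g (F j0)"
      by (simp add: agree_below_sym)
    ultimately show ?thesis
      by blast
  qed
  obtain f0 :: "'a list \<Rightarrow> 'b" where "f0 \<in> UNIV \<rightarrow> B"
    using approx by blast
  with approx have "extendable 0 f0"
    unfolding extendable_def agree_below_def by simp
  then obtain G where G: "\<And>k. extendable k (G k)" "\<And>k. agree_below k (G k) (G (Suc k))"
    using dependent_nat_choice[of extendable agree_below] extend by blast
  define f where "f w = G (Suc (length w)) w" for w
  have "f \<in> UNIV \<rightarrow> B"
    using G(1) unfolding f_def extendable_def by blast
  moreover have "Q k f" for k
  proof -
    obtain f' where "agree_below k f' (G k)" and "Q k f'"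
      using G(1)[of k] unfolding extendable_def by blast
    moreover have "agree_below k (G k) f"
      using agree_below_chain_limit[OF G(2)] unfolding f_def by (rule agree_below_sym)
    ultimately show ?thesis
      using local agree_below_trans by blast
  qed
  ultimately show ?thesis
    by blast
qed

abbreviation history :: "state \<Rightarrow> dir list" where
  "history s \<equiv> snd (snd (snd s))"

lemma step_history_length: "step f s s' \<Longrightarrow> length (history s') \<le> Suc (length (history s))"
  by (induction rule: step.induct) auto

lemma step_scheduler_cong: "step f s s' \<Longrightarrow> f (history s) = g (history s) \<Longrightarrow> step g s s'"
  by (induction rule: step.induct) (auto intro: step.intros)

lemma step_Prob_pos: "step f s s' \<Longrightarrow> 0 < Prob s \<Longrightarrow> 0 < Prob s'"
  by (induction rule: step.induct) (auto simp: Prob_def)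

lemma finite_step_successors: "finite {s'. step f s s'}"
proof -
  have "finite {s'. step f (P, \<eta>, a, w) s'}" for P \<eta> a w
  proof (induction P)
    case Bot
    have "{s'. step f (Bot, \<eta>, a, w) s'} \<subseteq> {}"
      by (auto elim: step.cases)
    then show ?case
      by (rule finite_subset) simp
  next
    case (Assign v e)
    have "{s'. step f (Assign v e, \<eta>, a, w) s'} \<subseteq> {(Bot, \<eta>(v := aval e \<eta>), a, w)}"
      by (auto elim: step.cases)
    then show ?case
      by (rule finite_subset) simp
  next
    case (Seq P1 P2)
    have "{s'. step f (Seq P1 P2, \<eta>, a, w) s'} \<subseteq>
        (\<lambda>(P1', r). (Seq P1' P2, r)) ` {s'. step f (P1, \<eta>, a, w) s'} \<union> {(P2, \<eta>, a, w)}"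
      by (auto elim: step.cases)
    then show ?case
      by (rule finite_subset) (simp add: Seq.IH(1))
  next
    case (PChoice P1 p P2)
    have "{s'. step f (PChoice P1 p P2, \<eta>, a, w) s'} \<subseteq>
        {(P2, \<eta>, a, w @ [Rp]), (P1, \<eta>, a, w @ [Lp]),
         (P1, \<eta>, a * aval p \<eta>, w @ [Lp]), (P2, \<eta>, a * (1 - aval p \<eta>), w @ [Rp])}"
      by (auto elim: step.cases)
    then show ?case
      by (rule finite_subset) simp
  next
    case (NChoice P1 P2)
    have "{s'. step f (NChoice P1 P2, \<eta>, a, w) s'} \<subseteq> {(P1, \<eta>, a, w @ [Ln]), (P2, \<eta>, a, w @ [Rn])}"
      by (auto elim: step.cases)
    then show ?case
      by (rule finite_subset) simp
  next
    case (While b P)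
    have "{s'. step f (While b P, \<eta>, a, w) s'} \<subseteq> {(Seq P (While b P), \<eta>, a, w), (Bot, \<eta>, a, w)}"
      by (auto elim: step.cases)
    then show ?case
      by (rule finite_subset) simp
  qed
  then show ?thesis
    by (cases s) simp
qed

lemma finite_relpowp_successors:
  fixes R :: "'a \<Rightarrow> 'a \<Rightarrow> bool"
  assumes "\<And>s. finite {s'. R s s'}"
  shows "finite {s'. (R ^^ n) s s'}"
proof (induction n)
  case (Suc n)
  have "{s'. (R ^^ Suc n) s s'} = (\<Union>t \<in> {t. (R ^^ n) s t}. {s'. R t s'})"
    by (auto elim: relpowp_Suc_E intro: relpowp_Suc_I)
  then show ?case
    using Suc.IH assms by simp
qed simp

lemma relpowp_step_history_length:
  "(step f ^^ n) s s' \<Longrightarrow> length (history s') \<le> length (history s) + n"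
proof (induction n arbitrary: s')
  case (Suc n)
  then show ?case
    by (fastforce elim: relpowp_Suc_E dest: step_history_length)
qed simp

lemma relpowp_step_agree_below:
  assumes "agree_below k f g" and "history s = []"
  shows "(step f ^^ n) s s' \<Longrightarrow> n \<le> k \<Longrightarrow> (step g ^^ n) s s'"
proof (induction n arbitrary: s')
  case (Suc n)
  then obtain t where t: "(step f ^^ n) s t" "step f t s'"
    by (auto elim: relpowp_Suc_E)
  have "length (history t) < k"
    using relpowp_step_history_length[OF t(1)] assms(2) Suc.prems(2) by simp
  then have "step g t s'"
    using t(2) assms(1) step_scheduler_cong unfolding agree_below_def by blast
  moreover have "(step g ^^ n) s t"
    using Suc.IH[OF t(1)] Suc.prems(2) by simp
  ultimately show ?case
    by (auto intro: relpowp_Suc_I)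
qed simp

lemma T_le_agree_below:
  assumes "agree_below k f g"
  shows "T_le k P f = T_le k P g"
proof -
  have "history (init_state P) = []"
    by (simp add: init_state_def)
  then show ?thesis
    using relpowp_step_agree_below[OF assms] relpowp_step_agree_below[OF agree_below_sym[OF assms]]
    unfolding T_le_def by blast
qed

lemma finite_T_le: "finite (T_le k P f)"
proof -
  have "T_le k P f \<subseteq> (\<Union>n \<le> k. {s. (step f ^^ n) (init_state P) s})"
    by (auto simp: T_le_def)
  then show ?thesis
    by (rule finite_subset) (simp add: finite_relpowp_successors finite_step_successors)
qed

lemma relpowp_step_Prob_pos: "(step f ^^ n) (init_state P) s \<Longrightarrow> 0 < Prob s"
proof (induction n arbitrary: s)
  case 0
  then show ?case
    by (auto simp: init_state_def Prob_def)
next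
  case (Suc n)
  then show ?case
    by (auto elim: relpowp_Suc_E intro: step_Prob_pos)
qed

lemma T_le_Prob_pos: "\<tau> \<in> T_le k P f \<Longrightarrow> 0 < Prob \<tau>"
  by (auto simp: T_le_def intro: relpowp_step_Prob_pos)

lemma sum_Prob_T_le_mono:
  assumes "j \<le> k"
  shows "(\<Sum>\<tau>\<in>T_le j P f. Prob \<tau>) \<le> (\<Sum>\<tau>\<in>T_le k P f. Prob \<tau>)"
proof (rule sum_mono2[OF finite_T_le])
  show "T_le j P f \<subseteq> T_le k P f"
    using assms by (auto simp: T_le_def)
qed (auto dest: T_le_Prob_pos)

lemma finite_subset_T_all_in_T_le:
  assumes "finite F" and "F \<subseteq> T_all P f"
  obtains k where "F \<subseteq> T_le k P f"
proof -
  have "\<forall>\<tau>\<in>F. \<exists>n. 1 \<le> n \<and> (step f ^^ n) (init_state P) \<tau>"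
    using assms(2) by (auto simp: T_all_def)
  then obtain n where n: "\<And>\<tau>. \<tau> \<in> F \<Longrightarrow> 1 \<le> n \<tau> \<and> (step f ^^ n \<tau>) (init_state P) \<tau>"
    by metis
  have "F \<subseteq> T_le (\<Sum>\<tau>\<in>F. n \<tau>) P f"
  proof
    fix \<tau>
    assume "\<tau> \<in> F"
    then have "n \<tau> \<le> (\<Sum>\<tau>\<in>F. n \<tau>)"
      using assms(1) by (simp add: member_le_sum)
    with \<open>\<tau> \<in> F\<close> show "\<tau> \<in> T_le (\<Sum>\<tau>\<in>F. n \<tau>) P f"
      using n assms(2) unfolding T_le_def T_all_def by blast
  qed
  then show thesis
    by (rule that)
qed

lemma Pr_term_le_if_T_le_sums_le:
  assumes "\<And>k. (\<Sum>\<tau>\<in>T_le k P f. Prob \<tau>) \<le> c"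
  shows "Pr_term P f \<le> of_rat c"
proof -
  have "(\<Sum>\<tau>\<in>F. of_rat (Prob \<tau>)) \<le> (of_rat c :: real)"
    if F: "finite F" "F \<subseteq> T_all P f" for F
  proof -
    obtain k where "F \<subseteq> T_le k P f"
      using finite_subset_T_all_in_T_le[OF F] .
    then have "(\<Sum>\<tau>\<in>F. of_rat (Prob \<tau>)) \<le> (\<Sum>\<tau>\<in>T_le k P f. of_rat (Prob \<tau>) :: real)"
      by (intro sum_mono2 finite_T_le) (auto dest: T_le_Prob_pos)
    also have "\<dots> \<le> of_rat c"
      using assms[of k] by (simp add: of_rat_sum[symmetric] of_rat_less_eq)
    finally show ?thesis .
  qed
  moreover have "\<tau> \<in> T_all P f \<Longrightarrow> 0 \<le> (of_rat (Prob \<tau>) :: real)" for \<tau>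
    by (auto simp: T_all_def dest: relpowp_step_Prob_pos)
  ultimately have "(\<lambda>\<tau>. real_of_rat (Prob \<tau>)) summable_on T_all P f"
    by (intro nonneg_bdd_above_summable_on bdd_aboveI2) auto
  then show ?thesis
    unfolding Pr_term_def by (rule infsum_le_finite_sums) fact
qed

lemma sum_Prob_T_le_below_req_time:
  "k < req_time P \<delta> f \<Longrightarrow> (\<Sum>\<tau>\<in>T_le k P f. Prob \<tau>) \<le> \<delta>"
  unfolding req_time_def using not_less_Least not_less by blast

lemma schedulers_eq_Pi: "schedulers = UNIV \<rightarrow> {Ln, Rn}"
  by (auto simp: schedulers_def)

instance dir :: finite
proof
  have UNIV_dir: "(UNIV :: dir set) = {Ln, Rn, Lp, Rp}"
    using dir.exhaust by blast
  show "finite (UNIV :: dir set)"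
    unfolding UNIV_dir by simp
qed

lemma exists_scheduler_T_le_bounded:
  assumes "\<And>k. \<exists>f \<in> schedulers. (\<Sum>\<tau>\<in>T_le k P f. Prob \<tau>) \<le> c"
  shows "\<exists>f \<in> schedulers. \<forall>k. (\<Sum>\<tau>\<in>T_le k P f. Prob \<tau>) \<le> c"
  unfolding schedulers_eq_Pi
proof (rule koenig_compactness)
  show "finite {Ln, Rn}"
    by simp
  show "(\<Sum>\<tau>\<in>T_le k P g. Prob \<tau>) \<le> c"
    if "agree_below k f g" and "(\<Sum>\<tau>\<in>T_le k P f. Prob \<tau>) \<le> c" for k f g
    using that(2) unfolding T_le_agree_below[OF that(1)] .
  show "(\<Sum>\<tau>\<in>T_le j P f. Prob \<tau>) \<le> c"
    if "j \<le> k" and "(\<Sum>\<tau>\<in>T_le k P f. Prob \<tau>) \<le> c" for j k f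
    using sum_Prob_T_le_mono[OF that(1)] that(2) by (rule order_trans)
  show "\<exists>f \<in> UNIV \<rightarrow> {Ln, Rn}. (\<Sum>\<tau>\<in>T_le k P f. Prob \<tau>) \<le> c" for k
    using assms[of k] unfolding schedulers_eq_Pi .
qed

theorem lemmaB3:
  fixes P :: prog and \<delta> :: rat
  assumes "P \<in> AST" and "0 < \<delta>" and "\<delta> < 1"
  shows "bdd_above (req_time P \<delta> ` schedulers)"
proof (rule ccontr)
  assume unbounded: "\<not> bdd_above (req_time P \<delta> ` schedulers)"
  have "\<exists>f \<in> schedulers. (\<Sum>\<tau>\<in>T_le k P f. Prob \<tau>) \<le> \<delta>" for k
  proof -
    obtain f where "f \<in> schedulers" and "k < req_time P \<delta> f"
      using unbounded by (meson bdd_aboveI2 not_le)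
    then show ?thesis
      using sum_Prob_T_le_below_req_time by blast
  qed
  then obtain f where f: "f \<in> schedulers" "\<And>k. (\<Sum>\<tau>\<in>T_le k P f. Prob \<tau>) \<le> \<delta>"
    using exists_scheduler_T_le_bounded by blast
  have "Pr_term P f \<le> of_rat \<delta>"
    using f(2) by (rule Pr_term_le_if_T_le_sums_le)
  also have "\<dots> < 1"
    using assms(3) by (simp add: of_rat_less_1_iff)
  finally have "Pr_term P f \<noteq> 1"
    by simp
  with assms(1) f(1) show False
    unfolding AST_def by blast
qed

end
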